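(* Let $\mathcal H_1,\dots,\mathcal H_9,\mathcal H_E$ be finite-dimensional complex Hilbert spaces and $|\psi\rangle\in\mathcal H_1\otimes\cdots\otimes\mathcal H_9\otimes\mathcal H_E$. For each $k\in[9]$ let $X_k,Z_k$ be Hermitian operators on $\mathcal H_k$ (extended by the identity to the whole space). Define $\tilde S_1=Z_1Z_2$, $\tilde S_2=Z_1Z_3$, $\tilde S_3=Z_4Z_5$, $\tilde S_4=Z_4Z_6$, $\tilde S_5=Z_7Z_8$, $\tilde S_6=Z_7Z_9$, $\tilde S_7=X_1X_2X_3X_4X_5X_6$, $\tilde S_8=X_1X_2X_3X_7X_8X_9$, $\tilde S_9=X_4X_5X_6X_7X_8X_9$. Assume (i) $X_kZ_k+Z_kX_k=0$ for $k\in\{1,4,7\}$; (ii) $\tilde S_k|\psi\rangle=|\psi\rangle$ for all $k\in[9]$; (iii) $X_k^2=Z_k^2=I$ for $k\in\{2,3,5,6,8,9\}$. Then for every $k\in[9]$: $X_k^2|\psi\rangle=Z_k^2|\psi\rangle=|\psi\rangle$ and $(X_kZ_k+Z_kX_k)|\psi\rangle=0$.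
   Context: Operators acting on different tensor factors commute. *)

theory Defs
  imports Complex_Main
begin

text \<open>Factor k (k = 1..9) and the
  environment E (encoded as index 0) have dimension d k; an orthonormal basis of
  the tensor product is indexed by tuples i :: nat => nat with i k < d k for
  k in {0..9} and i k = 0 otherwise.  A vector is a function from tuples to
  complex coefficients, supported on valid tuples.\<close>

definition valid_idx :: "(nat \<Rightarrow> nat) \<Rightarrow> (nat \<Rightarrow> nat) \<Rightarrow> bool" where
  "valid_idx d i \<longleftrightarrow> (\<forall>k\<le>9. i k < d k) \<and> (\<forall>k>9. i k = 0)"

definition is_state :: "(nat \<Rightarrow> nat) \<Rightarrow> ((nat \<Rightarrow> nat) \<Rightarrow> complex) \<Rightarrow> bool" where
  "is_state d \<psi> \<longleftrightarrow> (\<forall>i. \<not> valid_idx d i \<longrightarrow> \<psi> i = 0)"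

definition lift :: "(nat \<Rightarrow> nat) \<Rightarrow> nat \<Rightarrow> (nat \<Rightarrow> nat \<Rightarrow> complex)
                    \<Rightarrow> ((nat \<Rightarrow> nat) \<Rightarrow> complex) \<Rightarrow> ((nat \<Rightarrow> nat) \<Rightarrow> complex)" where
  "lift d k A \<psi> = (\<lambda>i. if valid_idx d i then (\<Sum>b<d k. A (i k) b * \<psi> (i(k := b))) else 0)"

definition apply_prod :: "(nat \<Rightarrow> nat) \<Rightarrow> (nat \<Rightarrow> nat \<Rightarrow> nat \<Rightarrow> complex) \<Rightarrow> nat list
                    \<Rightarrow> ((nat \<Rightarrow> nat) \<Rightarrow> complex) \<Rightarrow> ((nat \<Rightarrow> nat) \<Rightarrow> complex)" where
  "apply_prod d Ops ks \<psi> = foldr (\<lambda>k \<phi>. lift d k (Ops k) \<phi>) ks \<psi>"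

definition hermitian_mat :: "nat \<Rightarrow> (nat \<Rightarrow> nat \<Rightarrow> complex) \<Rightarrow> bool" where
  "hermitian_mat n A \<longleftrightarrow> (\<forall>a<n. \<forall>b<n. A a b = cnj (A b a))"

definition mat_mult :: "nat \<Rightarrow> (nat \<Rightarrow> nat \<Rightarrow> complex) \<Rightarrow> (nat \<Rightarrow> nat \<Rightarrow> complex) \<Rightarrow> nat \<Rightarrow> nat \<Rightarrow> complex" where
  "mat_mult n A B = (\<lambda>a b. \<Sum>c<n. A a c * B c b)"

definition is_identity :: "nat \<Rightarrow> (nat \<Rightarrow> nat \<Rightarrow> complex) \<Rightarrow> bool" where
  "is_identity n A \<longleftrightarrow> (\<forall>a<n. \<forall>b<n. A a b = (if a = b then 1 else 0))"

definition anticommute :: "nat \<Rightarrow> (nat \<Rightarrow> nat \<Rightarrow> complex) \<Rightarrow> (nat \<Rightarrow> nat \<Rightarrow> complex) \<Rightarrow> bool" where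
  "anticommute n A B \<longleftrightarrow> (\<forall>a<n. \<forall>b<n. mat_mult n A B a b + mat_mult n B A a b = 0)"

end

theory Submission
  imports Defs "HOL-Library.Multiset"
begin

text \<open>Local operators on distinct tensor factors commute, so a product of local operators
  may be reordered freely, and an involutive factor occurring twice cancels.  The nine
  factors form three blocks {1,2,3}, {4,5,6}, {7,8,9} with heads 1, 4, 7.
  For a leg k with head j (e.g. k = 2, j = 1) the stabilizers give Z_k \<psi> = Z_j \<psi> and
  X_k \<psi> = X_j R \<psi> with R a product of X's on other legs, hence
  (X_k Z_k + Z_k X_k) \<psi> = (Z_j X_j + X_j Z_j) R \<psi> = 0.
  For a head, e.g. X_1, the product of the two X-stabilizers containing X_1 equals X_1^2 times
  the third one after cancelling X_2^2 and X_3^2, so X_1^2 \<psi> = \<psi>; likewise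
  Z_1^2 \<psi> = (Z_1 Z_2)^2 \<psi> = \<psi>.\<close>

abbreviation involution :: "nat \<Rightarrow> (nat \<Rightarrow> nat \<Rightarrow> complex) \<Rightarrow> bool" where
  "involution n A \<equiv> is_identity n (mat_mult n A A)"

lemma valid_idx_upd: "valid_idx d i \<Longrightarrow> k \<le> 9 \<Longrightarrow> b < d k \<Longrightarrow> valid_idx d (i(k := b))"
  by (auto simp: valid_idx_def)

lemma is_state_lift [simp]: "is_state d (lift d k A \<phi>)"
  by (simp add: is_state_def lift_def)

lemma lift_commute:
  assumes "k \<le> 9" "l \<le> 9" "k \<noteq> l"
  shows "lift d k A (lift d l B \<phi>) = lift d l B (lift d k A \<phi>)"
proof (rule ext)
  fix i
  show "lift d k A (lift d l B \<phi>) i = lift d l B (lift d k A \<phi>) i"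
  proof (cases "valid_idx d i")
    case True
    have "lift d k A (lift d l B \<phi>) i
        = (\<Sum>b<d k. \<Sum>c<d l. A (i k) b * (B (i l) c * \<phi> (i(k := b, l := c))))"
      using True assms by (simp add: lift_def valid_idx_upd sum_distrib_left)
    also have "\<dots> = (\<Sum>c<d l. \<Sum>b<d k. B (i l) c * (A (i k) b * \<phi> (i(l := c, k := b))))"
      using assms by (subst sum.swap) (simp add: fun_upd_twist mult.left_commute)
    also have "\<dots> = lift d l B (lift d k A \<phi>) i"
      using True assms by (simp add: lift_def valid_idx_upd sum_distrib_left)
    finally show ?thesis .
  qed (simp add: lift_def)
qed

lemma lift_lift:
  assumes "k \<le> 9"
  shows "lift d k A (lift d k B \<phi>) = lift d k (mat_mult (d k) A B) \<phi>"
proof (rule ext)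
  fix i
  show "lift d k A (lift d k B \<phi>) i = lift d k (mat_mult (d k) A B) \<phi> i"
  proof (cases "valid_idx d i")
    case True
    have "lift d k A (lift d k B \<phi>) i = (\<Sum>b<d k. \<Sum>c<d k. A (i k) b * (B b c * \<phi> (i(k := c))))"
      using True assms by (simp add: lift_def valid_idx_upd sum_distrib_left)
    also have "\<dots> = (\<Sum>c<d k. (\<Sum>b<d k. A (i k) b * B b c) * \<phi> (i(k := c)))"
      by (subst sum.swap) (simp add: sum_distrib_right mult.assoc)
    also have "\<dots> = lift d k (mat_mult (d k) A B) \<phi> i"
      using True by (simp add: lift_def mat_mult_def)
    finally show ?thesis .
  qed (simp add: lift_def)
qed

lemma lift_identity:
  assumes "k \<le> 9" "is_identity (d k) M" "is_state d \<phi>"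
  shows "lift d k M \<phi> = \<phi>"
proof (rule ext)
  fix i
  show "lift d k M \<phi> i = \<phi> i"
  proof (cases "valid_idx d i")
    case True
    then have ik: "i k < d k"
      using assms(1) by (simp add: valid_idx_def)
    have "lift d k M \<phi> i = (\<Sum>b<d k. (if i k = b then 1 else 0) * \<phi> (i(k := b)))"
      using True assms(2) ik by (simp add: lift_def is_identity_def)
    also have "\<dots> = (\<Sum>b<d k. if b = i k then \<phi> (i(k := b)) else 0)"
      by (rule sum.cong) auto
    also have "\<dots> = \<phi> i"
      using ik by simp
    finally show ?thesis .
  qed (use assms(3) in \<open>simp add: lift_def is_state_def\<close>)
qed

lemma lift_involution:
  assumes "k \<le> 9" "involution (d k) M" "is_state d \<phi>"
  shows "lift d k M (lift d k M \<phi>) = \<phi>"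
  using assms by (simp add: lift_lift lift_identity)

lemma lift_anticommute:
  assumes "k \<le> 9" "anticommute (d k) A B"
  shows "(\<lambda>i. lift d k A (lift d k B \<phi>) i + lift d k B (lift d k A \<phi>) i) = (\<lambda>i. 0)"
proof (rule ext)
  fix i
  show "lift d k A (lift d k B \<phi>) i + lift d k B (lift d k A \<phi>) i = 0"
  proof (cases "valid_idx d i")
    case True
    then have ik: "i k < d k"
      using assms(1) by (simp add: valid_idx_def)
    have "lift d k A (lift d k B \<phi>) i + lift d k B (lift d k A \<phi>) i
        = lift d k (mat_mult (d k) A B) \<phi> i + lift d k (mat_mult (d k) B A) \<phi> i"
      using assms(1) by (simp only: lift_lift)
    also have "\<dots>
        = (\<Sum>c<d k. (mat_mult (d k) A B (i k) c + mat_mult (d k) B A (i k) c) * \<phi> (i(k := c)))"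
      using True by (simp add: lift_def sum.distrib distrib_right)
    also have "\<dots> = 0"
      using assms(2) ik by (simp add: anticommute_def)
    finally show ?thesis .
  qed (simp add: lift_def)
qed

lemma lift_involution_swap:
  assumes "j \<le> 9" "k \<le> 9" "j \<noteq> k" "involution (d k) M" "is_state d \<phi>"
    and "lift d j A (lift d k M \<phi>) = \<psi>"
  shows "lift d k M \<psi> = lift d j A \<phi>"
  using assms by (metis lift_commute lift_involution)

lemma apply_prod_Nil [simp]: "apply_prod d Ops [] \<phi> = \<phi>"
  by (simp add: apply_prod_def)

lemma apply_prod_Cons [simp]:
  "apply_prod d Ops (k # ks) \<phi> = lift d k (Ops k) (apply_prod d Ops ks \<phi>)"
  by (simp add: apply_prod_def)

lemma apply_prod_append:
  "apply_prod d Ops (ks @ ls) \<phi> = apply_prod d Ops ks (apply_prod d Ops ls \<phi>)"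
  by (simp add: apply_prod_def)

lemma is_state_apply_prod: "is_state d \<phi> \<Longrightarrow> is_state d (apply_prod d Ops ks \<phi>)"
  by (cases ks) simp_all

lemma lift_apply_prod_commute:
  assumes "k \<le> 9" "set ks \<subseteq> {..9}" "k \<notin> set ks"
  shows "lift d k A (apply_prod d Ops ks \<phi>) = apply_prod d Ops ks (lift d k A \<phi>)"
  using assms by (induction ks) (auto simp: lift_commute)

text \<open>Equal indices carry the same operator, so only factors on distinct tensor slots ever
  have to be swapped; the lists need not be distinct.\<close>

lemma apply_prod_mset_eq:
  assumes "mset ks = mset ls" "set ks \<subseteq> {..9}"
  shows "apply_prod d Ops ks = apply_prod d Ops ls"
  using assms
proof (induction ks arbitrary: ls)
  case Nil
  then show ?case by simp
next
  case (Cons k ks)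
  then have "k \<in> set ls"
    by (metis list.set_intros(1) set_mset_mset)
  then obtain us vs where ls: "ls = us @ k # vs" and "k \<notin> set us"
    by (auto dest: split_list_first)
  moreover have "set us \<subseteq> {..9}"
    using Cons.prems ls by (metis Un_subset_iff set_append set_mset_mset)
  moreover have "apply_prod d Ops ks = apply_prod d Ops (us @ vs)"
    using Cons by (intro Cons.IH) (auto simp: ls)
  ultimately show ?case
    using Cons.prems(2) by (auto simp: apply_prod_append lift_apply_prod_commute)
qed

lemma apply_prod_cancel_involutions:
  assumes "mset ks = mset ls + mset (js @ js)" "set ks \<subseteq> {..9}"
    and "\<forall>j\<in>set js. involution (d j) (Ops j)" "is_state d \<phi>"
  shows "apply_prod d Ops ks \<phi> = apply_prod d Ops ls \<phi>"
proof -
  let ?pairs = "concat (map (\<lambda>j. [j, j]) js)"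
  have "mset ?pairs = mset (js @ js)"
    by (induction js) (simp_all add: add_ac)
  then have "mset ks = mset (?pairs @ ls)"
    using assms(1) by (simp add: add_ac)
  then have "apply_prod d Ops ks \<phi> = apply_prod d Ops (?pairs @ ls) \<phi>"
    using apply_prod_mset_eq assms(2) by metis
  also have "\<dots> = apply_prod d Ops ls \<phi>"
  proof -
    have "set js \<subseteq> {..9}"
      using assms(1,2) by (metis Un_subset_iff set_append set_mset_mset set_mset_union)
    then show ?thesis
      using assms(3,4)
      by (induction js) (auto simp: apply_prod_append lift_involution is_state_apply_prod)
  qed
  finally show ?thesis .
qed

lemma lift_square_eq_of_stabilizers:
  assumes "apply_prod d Ops ks \<psi> = \<psi>" "apply_prod d Ops ls \<psi> = \<psi>" "apply_prod d Ops ms \<psi> = \<psi>"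
    and "mset (ks @ ls) = mset (a # a # ms) + mset (js @ js)" "set (ks @ ls) \<subseteq> {..9}"
    and "\<forall>j\<in>set js. involution (d j) (Ops j)" "is_state d \<psi>"
  shows "lift d a (Ops a) (lift d a (Ops a) \<psi>) = \<psi>"
proof -
  have "lift d a (Ops a) (lift d a (Ops a) \<psi>) = apply_prod d Ops (a # a # ms) \<psi>"
    using assms(3) by simp
  also have "\<dots> = apply_prod d Ops (ks @ ls) \<psi>"
    using assms(4-7) by (intro apply_prod_cancel_involutions[symmetric])
  also have "\<dots> = \<psi>"
    using assms(1,2) by (simp add: apply_prod_append)
  finally show ?thesis .
qed

lemma anticommute_transfer:
  assumes "j \<le> 9" "k \<le> 9" "j \<noteq> k" "set rs \<subseteq> {..9}" "j \<notin> set rs" "k \<notin> set rs"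
    and "anticommute (d j) A B"
    and hB: "lift d k D \<psi> = lift d j B \<psi>"
    and hA: "lift d k C \<psi> = lift d j A (apply_prod d Ops rs \<psi>)"
  shows "(\<lambda>i. lift d k C (lift d k D \<psi>) i + lift d k D (lift d k C \<psi>) i) = (\<lambda>i. 0)"
proof -
  let ?R = "apply_prod d Ops rs"
  have "lift d k C (lift d k D \<psi>) = lift d j B (lift d j A (?R \<psi>))"
    using assms(1-3) by (simp add: hB lift_commute flip: hA)
  moreover have "lift d k D (lift d k C \<psi>) = lift d j A (lift d j B (?R \<psi>))"
    using assms(1-6) by (simp add: hA lift_commute lift_apply_prod_commute flip: hB)
  ultimately show ?thesis
    using lift_anticommute[where d = d and k = j and \<phi> = "?R \<psi>"] assms(1,7)
    by (simp add: add.commute)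
qed

lemma leg_anticommute:
  assumes "j \<le> 9" "k \<le> 9" "j \<noteq> k" "anticommute (d j) (X j) (Z j)"
    and "involution (d k) (X k)" "involution (d k) (Z k)" "is_state d \<psi>"
    and "apply_prod d Z [j, k] \<psi> = \<psi>"
    and "apply_prod d X xs \<psi> = \<psi>" "distinct xs" "set xs \<subseteq> {..9}" "j \<in> set xs" "k \<in> set xs"
  shows "(\<lambda>i. lift d k (X k) (lift d k (Z k) \<psi>) i + lift d k (Z k) (lift d k (X k) \<psi>) i) = (\<lambda>i. 0)"
proof -
  define rs where "rs = filter (\<lambda>i. i \<notin> {j, k}) xs"
  have "mset xs = mset (j # k # rs)"
    using assms(3,10,12,13) by (subst set_eq_iff_mset_eq_distinct[symmetric]) (auto simp: rs_def)
  then have "apply_prod d X (j # k # rs) \<psi> = \<psi>"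
    using assms(9,11) apply_prod_mset_eq by metis
  then have "lift d k (X k) \<psi> = lift d j (X j) (apply_prod d X rs \<psi>)"
    using assms(1-3,5,7) by (intro lift_involution_swap) (simp_all add: is_state_apply_prod)
  moreover have "lift d k (Z k) \<psi> = lift d j (Z j) \<psi>"
    using assms(1-3,6-8) by (intro lift_involution_swap) simp_all
  moreover have "set rs \<subseteq> {..9}" "j \<notin> set rs" "k \<notin> set rs"
    using assms(11) by (auto simp: rs_def)
  ultimately show ?thesis
    using assms(1-4) by (intro anticommute_transfer[where Ops = X]) simp_all
qed

theorem mainTheorem4:
  fixes d :: "nat \<Rightarrow> nat"
    and X Z :: "nat \<Rightarrow> nat \<Rightarrow> nat \<Rightarrow> complex"
    and \<psi> :: "(nat \<Rightarrow> nat) \<Rightarrow> complex"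
  assumes state: "is_state d \<psi>"
    and herm: "\<forall>k\<in>{1..9}. hermitian_mat (d k) (X k) \<and> hermitian_mat (d k) (Z k)"
    and anti: "\<forall>k\<in>{1,4,7}. anticommute (d k) (X k) (Z k)"
    and stab: "apply_prod d Z [1,2] \<psi> = \<psi>" "apply_prod d Z [1,3] \<psi> = \<psi>"
      "apply_prod d Z [4,5] \<psi> = \<psi>" "apply_prod d Z [4,6] \<psi> = \<psi>"
      "apply_prod d Z [7,8] \<psi> = \<psi>" "apply_prod d Z [7,9] \<psi> = \<psi>"
      "apply_prod d X [1,2,3,4,5,6] \<psi> = \<psi>"
      "apply_prod d X [1,2,3,7,8,9] \<psi> = \<psi>"
      "apply_prod d X [4,5,6,7,8,9] \<psi> = \<psi>"
    and sq: "\<forall>k\<in>{2,3,5,6,8,9}. is_identity (d k) (mat_mult (d k) (X k) (X k))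
                                \<and> is_identity (d k) (mat_mult (d k) (Z k) (Z k))"
  shows "\<forall>k\<in>{1..9}.
           lift d k (X k) (lift d k (X k) \<psi>) = \<psi>
         \<and> lift d k (Z k) (lift d k (Z k) \<psi>) = \<psi>
         \<and> (\<lambda>i. lift d k (X k) (lift d k (Z k) \<psi>) i + lift d k (Z k) (lift d k (X k) \<psi>) i) = (\<lambda>i. 0)"
proof -
  note lift_square = lift_square_eq_of_stabilizers[where d = d and \<psi> = \<psi>]
  have X_heads: "lift d 1 (X 1) (lift d 1 (X 1) \<psi>) = \<psi>"
      "lift d 4 (X 4) (lift d 4 (X 4) \<psi>) = \<psi>" "lift d 7 (X 7) (lift d 7 (X 7) \<psi>) = \<psi>"
    by (rule lift_square[OF stab(7) stab(8) stab(9), where js = "[2,3]"]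
        lift_square[OF stab(7) stab(9) stab(8), where js = "[5,6]"]
        lift_square[OF stab(8) stab(9) stab(7), where js = "[8,9]"];
        use sq state in \<open>simp add: add_mset_commute\<close>)+
  have Z_heads: "lift d 1 (Z 1) (lift d 1 (Z 1) \<psi>) = \<psi>"
      "lift d 4 (Z 4) (lift d 4 (Z 4) \<psi>) = \<psi>" "lift d 7 (Z 7) (lift d 7 (Z 7) \<psi>) = \<psi>"
    by (rule lift_square[OF stab(1) stab(1), where ms = "[]" and js = "[2]"]
        lift_square[OF stab(3) stab(3), where ms = "[]" and js = "[5]"]
        lift_square[OF stab(5) stab(5), where ms = "[]" and js = "[8]"];
        use sq state in simp)+
  let ?sq = "\<lambda>A k. lift d k (A k) (lift d k (A k) \<psi>) = \<psi>"
  let ?anti = "\<lambda>k. (\<lambda>i. lift d k (X k) (lift d k (Z k) \<psi>) i + lift d k (Z k) (lift d k (X k) \<psi>) i)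
      = (\<lambda>i. 0)"
  have legs_sq: "?sq X k \<and> ?sq Z k" if "k \<in> {2,3,5,6,8,9}" for k
    using that sq state by (auto intro: lift_involution)
  have anti_legs_1: "?anti k" if "k \<in> {2,3}" for k
    using that anti sq stab(1,2,7)
    by (intro leg_anticommute[where j = 1 and xs = "[1,2,3,4,5,6]", OF _ _ _ _ _ _ state]) auto
  have anti_legs_4: "?anti k" if "k \<in> {5,6}" for k
    using that anti sq stab(3,4,7)
    by (intro leg_anticommute[where j = 4 and xs = "[1,2,3,4,5,6]", OF _ _ _ _ _ _ state]) auto
  have anti_legs_7: "?anti k" if "k \<in> {8,9}" for k
    using that anti sq stab(5,6,8)
    by (intro leg_anticommute[where j = 7 and xs = "[1,2,3,7,8,9]", OF _ _ _ _ _ _ state]) auto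
  have anti_heads: "?anti k" if "k \<in> {1,4,7}" for k
    using that anti by (intro lift_anticommute) auto
  show ?thesis
  proof
    fix k :: nat
    assume "k \<in> {1..9}"
    then consider "k \<in> {1,4,7}" | "k \<in> {2,3}" | "k \<in> {5,6}" | "k \<in> {8,9}"
      by fastforce
    then show "?sq X k \<and> ?sq Z k \<and> ?anti k"
      by cases (use X_heads Z_heads legs_sq anti_heads anti_legs_1 anti_legs_4 anti_legs_7 in auto)
  qed
qed

end
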